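(* Let $\lambda>0$, let $\gamma\ge0$, and let $Z_s\in\mathbb{R}^{1\times(n+m)}$ be row vectors with $\|Z_s\|_2\le1+\gamma$. Let $\Theta^*_s\in\mathbb{R}^{(n+m)\times n}$ satisfy $\sum_{s=1}^{H-1}\|\Theta^*_{s+1}-\Theta^*_s\|_F\le\mathcal{B}_H$. Let $h_0\le h$ lie in the same restart epoch of size $L$ (so $h-h_0\le L$). Then for any $h\in[H]$, \[ \Big\|\Big(\sum_{s=h_0}^{h-1}Z_s^\top Z_s+\lambda I\Big)^{-1}\Big(\sum_{s=h_0}^{h-1}Z_s^\top Z_s(\Theta^*_s-\Theta^*_h)\Big)\Big\|_F\le(1+\gamma)\sqrt{\tfrac{L(m+n)}{\lambda}}\,\mathcal{B}_H. \]
   Context: In the paper, $Z_s=[x_s^\top,u_s^\top]$ for the states and controls of a time-varying linear system $x_{s+1}=A_sx_s+B_su_s+w_s$ with $\Theta^*_s=[A_s,B_s]^\top$, the bound $\|Z_s\|_2\le1+\gamma$ holds with $\gamma$ a bound on the control norms $\|u_s\|_2$ (states having norm at most $1$), and $h_0$ is the start of the current epoch of the restarting strategy with epoch length $L$. *)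

theory Defs
  imports "HOL-Analysis.Analysis"
begin

definition outer :: "real^'d \<Rightarrow> real^'d^'d" where
  "outer z = (\<chi> i j. z $ i * z $ j)"

definition frob_norm :: "real^'c^'r \<Rightarrow> real" where
  "frob_norm M = sqrt (\<Sum>i\<in>UNIV. \<Sum>j\<in>UNIV. (M $ i $ j)^2)"

end

theory Submission
  imports Defs
begin

(* Write V = (SUM s. z_s z_s^T) + lam I and r_i for the i-th row of V^-1. Entry (i,j) of
   V^-1 (SUM s. z_s z_s^T D_s) is SUM s. (r_i . z_s) (z_s . D_s e_j). As V is symmetric,
   V r_i = e_i, so evaluating the quadratic form of V at r_i gives
   SUM s. (z_s . r_i)^2 + lam |r_i|^2 = (r_i)_i, whence SUM s. (z_s . r_i)^2 <= 1/(4 lam).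
   Cauchy-Schwarz over s then bounds the squared Frobenius norm by
   (n+m)/(4 lam) SUM s. |z_s|^2 |D_s|_F^2, and each drift D_s = Theta_s - Theta_h is at most
   the total variation B_H by telescoping. *)

lemma power2_norm_vec: "(norm (x::'a::real_normed_vector^'n))^2 = (\<Sum>i\<in>UNIV. (norm (x$i))^2)"
  unfolding norm_vec_def L2_set_def by (simp add: sum_nonneg)

lemma power2_norm_vec_real: "(norm (x::real^'n))^2 = (\<Sum>i\<in>UNIV. (x$i)^2)"
  by (simp add: power2_norm_vec)

lemma frob_norm_eq_norm: "frob_norm (M::real^'c^'r) = norm M"
proof -
  have "(\<Sum>i\<in>UNIV. \<Sum>j\<in>UNIV. (M $ i $ j)^2) = (norm M)^2"
    by (simp add: power2_norm_vec power2_norm_vec_real)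
  then show ?thesis
    by (simp add: frob_norm_def)
qed

lemma power2_norm_eq_sum_columns:
  "(norm (M::real^'c^'r))^2 = (\<Sum>j\<in>UNIV. (norm (column j M))^2)"
  by (simp add: power2_norm_vec power2_norm_vec_real column_def) (rule sum.swap)

lemma sum_power2_inner_columns_le:
  fixes z :: "real^'r" and M :: "real^'c^'r"
  shows "(\<Sum>j\<in>UNIV. (z \<bullet> column j M)^2) \<le> (norm z)^2 * (norm M)^2"
proof -
  have "(\<Sum>j\<in>UNIV. (z \<bullet> column j M)^2) \<le> (\<Sum>j\<in>UNIV. (norm z)^2 * (norm (column j M))^2)"
    by (intro sum_mono) (simp add: Cauchy_Schwarz_ineq power2_norm_eq_inner)
  then show ?thesis
    by (simp add: power2_norm_eq_sum_columns sum_distrib_left)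
qed

lemma outer_mult_vec: "outer z *v x = (z \<bullet> x) *\<^sub>R (z::real^'d)"
  by (simp add: vec_eq_iff outer_def matrix_vector_mult_def inner_vec_def sum_distrib_left mult_ac)

definition ridge_gram :: "'s set \<Rightarrow> ('s \<Rightarrow> real^'d) \<Rightarrow> real \<Rightarrow> real^'d^'d" where
  "ridge_gram S Z lam = (\<Sum>s\<in>S. outer (Z s)) + lam *\<^sub>R mat 1"

lemma transpose_ridge_gram [simp]: "transpose (ridge_gram S Z lam) = ridge_gram S Z lam"
  by (simp add: vec_eq_iff ridge_gram_def transpose_def outer_def mat_def mult.commute)

lemma sum_matrix_vector_mult: "(\<Sum>s\<in>S. A s) *v x = (\<Sum>s\<in>S. A s *v x)"
  by (simp add: vec_eq_iff matrix_vector_mult_def sum_distrib_right) (intro allI sum.swap)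

lemma ridge_gram_mult_vec:
  "ridge_gram S Z lam *v x = (\<Sum>s\<in>S. (Z s \<bullet> x) *\<^sub>R Z s) + lam *\<^sub>R x"
  by (simp add: ridge_gram_def matrix_vector_mult_add_rdistrib sum_matrix_vector_mult
      outer_mult_vec flip: scaleR_matrix_vector_assoc)

lemma ridge_gram_quadratic_form:
  "x \<bullet> (ridge_gram S Z lam *v x) = (\<Sum>s\<in>S. (Z s \<bullet> x)^2) + lam * (norm x)^2"
  by (simp add: ridge_gram_mult_vec inner_add_right inner_sum_right inner_commute
      power2_eq_square flip: power2_norm_eq_inner)

lemma invertible_ridge_gram:
  assumes "lam > 0"
  shows "invertible (ridge_gram S Z lam)"
  unfolding invertible_left_inverse matrix_left_invertible_ker
proof (intro allI impI)
  fix x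
  assume "ridge_gram S Z lam *v x = 0"
  then have "(\<Sum>s\<in>S. (Z s \<bullet> x)^2) + lam * (norm x)^2 = 0"
    by (simp flip: ridge_gram_quadratic_form)
  moreover have "(\<Sum>s\<in>S. (Z s \<bullet> x)^2) \<ge> 0"
    by (simp add: sum_nonneg)
  ultimately have "lam * (norm x)^2 \<le> 0"
    by linarith
  then show "x = 0"
    using assms by (simp add: mult_le_0_iff)
qed

lemma matrix_inv_left:
  assumes "invertible A"
  shows "matrix_inv A ** A = mat 1"
  using assms unfolding invertible_def matrix_inv_def by (rule someI2_ex) auto

lemma row_mat_1: "row i (mat 1 :: 'a::zero_neq_one^'n^'n) = axis i 1"
  by (simp add: vec_eq_iff row_def mat_def axis_def)

lemma row_matrix_matrix_mult: "row i (A ** B) = row i A v* B"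
  by (simp add: vec_eq_iff row_def matrix_matrix_mult_def vector_matrix_mult_def)

lemma ridge_gram_mult_row_inverse:
  assumes "lam > 0"
  shows "ridge_gram S Z lam *v row i (matrix_inv (ridge_gram S Z lam)) = axis i 1"
proof -
  let ?V = "ridge_gram S Z lam"
  have "?V *v row i (matrix_inv ?V) = row i (matrix_inv ?V ** ?V)"
    by (metis row_matrix_matrix_mult transpose_matrix_vector transpose_ridge_gram)
  then show ?thesis
    by (simp add: matrix_inv_left invertible_ridge_gram assms row_mat_1)
qed

lemma sum_power2_inner_row_inverse_le:
  assumes "lam > 0"
  shows "(\<Sum>s\<in>S. (row i (matrix_inv (ridge_gram S Z lam)) \<bullet> Z s)^2) \<le> 1 / (4 * lam)"
proof -
  define r where "r = row i (matrix_inv (ridge_gram S Z lam))"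
  have form: "(\<Sum>s\<in>S. (Z s \<bullet> r)^2) + lam * (norm r)^2 = r $ i"
    using ridge_gram_quadratic_form[of r S Z lam]
    by (simp add: r_def ridge_gram_mult_row_inverse assms inner_axis)
  have "(r $ i)^2 \<le> (norm r)^2"
    by (metis abs_le_square_iff abs_norm_cancel component_le_norm_cart)
  then have "lam * (r $ i)^2 \<le> lam * (norm r)^2"
    using assms by simp
  moreover have "r $ i - lam * (r $ i)^2 \<le> 1 / (4 * lam)"
    using assms zero_le_power2[of "2 * lam * r $ i - 1"]
    by (simp add: field_simps power2_eq_square)
  ultimately have "(\<Sum>s\<in>S. (Z s \<bullet> r)^2) \<le> 1 / (4 * lam)"
    using form by linarith
  then show ?thesis
    by (simp add: r_def inner_commute)
qed

lemma matrix_matrix_mult_entry: "(A ** B) $ i $ j = row i A \<bullet> column j (B::real^'c^'d)"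
  by (simp add: matrix_matrix_mult_def row_def column_def inner_vec_def)

lemma column_matrix_matrix_mult: "column j (A ** B) = A *v column j B"
  by (simp add: vec_eq_iff column_def matrix_matrix_mult_def matrix_vector_mult_def)

lemma column_sum: "column j (\<Sum>s\<in>S. M s) = (\<Sum>s\<in>S. column j (M s))"
  by (simp add: vec_eq_iff column_def)

lemma matrix_mult_sum_outer_entry:
  fixes A :: "real^'d^'e" and Z :: "'s \<Rightarrow> real^'d" and D :: "'s \<Rightarrow> real^'c^'d"
  shows "(A ** (\<Sum>s\<in>S. outer (Z s) ** D s)) $ i $ j
    = (\<Sum>s\<in>S. (row i A \<bullet> Z s) * (Z s \<bullet> column j (D s)))"
  by (simp add: matrix_matrix_mult_entry column_sum column_matrix_matrix_mult outer_mult_vec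
      inner_sum_right mult.commute)

lemma power2_norm_ridge_bias_le:
  fixes Z :: "'s \<Rightarrow> real^'d" and D :: "'s \<Rightarrow> real^'c^'d"
  assumes "lam > 0"
  shows "(norm (matrix_inv (ridge_gram S Z lam) ** (\<Sum>s\<in>S. outer (Z s) ** D s)))^2
    \<le> real CARD('d) / (4 * lam) * (\<Sum>s\<in>S. (norm (Z s))^2 * (norm (D s))^2)"
proof -
  define M where "M = matrix_inv (ridge_gram S Z lam) ** (\<Sum>s\<in>S. outer (Z s) ** D s)"
  define W where "W = (\<Sum>s\<in>S. (norm (Z s))^2 * (norm (D s))^2)"
  have entry: "(M $ i $ j)^2 \<le> 1 / (4 * lam) * (\<Sum>s\<in>S. (Z s \<bullet> column j (D s))^2)" for i j
  proof -
    have "(M $ i $ j)^2 \<le> (\<Sum>s\<in>S. (row i (matrix_inv (ridge_gram S Z lam)) \<bullet> Z s)^2)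
        * (\<Sum>s\<in>S. (Z s \<bullet> column j (D s))^2)"
      unfolding M_def matrix_mult_sum_outer_entry by (rule Cauchy_Schwarz_ineq_sum)
    also have "\<dots> \<le> 1 / (4 * lam) * (\<Sum>s\<in>S. (Z s \<bullet> column j (D s))^2)"
      by (intro mult_right_mono sum_power2_inner_row_inverse_le assms sum_nonneg) simp
    finally show ?thesis .
  qed
  have row: "(norm (M $ i))^2 \<le> W / (4 * lam)" for i
  proof -
    have "(norm (M $ i))^2 \<le> (\<Sum>j\<in>UNIV. 1 / (4 * lam) * (\<Sum>s\<in>S. (Z s \<bullet> column j (D s))^2))"
      unfolding power2_norm_vec_real by (intro sum_mono entry)
    also have "\<dots> = 1 / (4 * lam) * (\<Sum>s\<in>S. \<Sum>j\<in>UNIV. (Z s \<bullet> column j (D s))^2)"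
      unfolding sum_distrib_left by (rule sum.swap)
    also have "\<dots> \<le> 1 / (4 * lam) * W"
      unfolding W_def using assms
      by (intro mult_left_mono sum_mono sum_power2_inner_columns_le) simp_all
    finally show ?thesis by simp
  qed
  have "(norm M)^2 = (\<Sum>i\<in>UNIV. (norm (M $ i))^2)"
    by (rule power2_norm_vec)
  also have "\<dots> \<le> (\<Sum>i\<in>(UNIV::'d set). W / (4 * lam))"
    by (intro sum_mono row)
  finally show ?thesis by (simp add: M_def W_def)
qed

lemma norm_ridge_bias_le:
  fixes Z :: "'s \<Rightarrow> real^'d" and D :: "'s \<Rightarrow> real^'c^'d"
  assumes "lam > 0" and "0 \<le> \<rho>" and "0 \<le> B"
    and "\<And>s. s \<in> S \<Longrightarrow> norm (Z s) \<le> \<rho>" and "\<And>s. s \<in> S \<Longrightarrow> norm (D s) \<le> B"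
  shows "norm (matrix_inv (ridge_gram S Z lam) ** (\<Sum>s\<in>S. outer (Z s) ** D s))
    \<le> \<rho> * B * sqrt (real CARD('d) * real (card S) / (4 * lam))"
proof (rule power2_le_imp_le)
  have weights: "(\<Sum>s\<in>S. (norm (Z s))^2 * (norm (D s))^2) \<le> card S * (\<rho>^2 * B^2)"
    using assms(4,5) by (intro sum_bounded_above mult_mono power_mono) auto
  have "(norm (matrix_inv (ridge_gram S Z lam) ** (\<Sum>s\<in>S. outer (Z s) ** D s)))^2
      \<le> real CARD('d) / (4 * lam) * (\<Sum>s\<in>S. (norm (Z s))^2 * (norm (D s))^2)"
    by (rule power2_norm_ridge_bias_le[OF assms(1)])
  also have "\<dots> \<le> real CARD('d) / (4 * lam) * (card S * (\<rho>^2 * B^2))"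
    using weights assms(1) by (intro mult_left_mono) simp_all
  also have "\<dots> = (\<rho> * B * sqrt (real CARD('d) * real (card S) / (4 * lam)))^2"
    using assms(1) by (simp add: power_mult_distrib)
  finally show "(norm (matrix_inv (ridge_gram S Z lam) ** (\<Sum>s\<in>S. outer (Z s) ** D s)))^2
      \<le> (\<rho> * B * sqrt (real CARD('d) * real (card S) / (4 * lam)))^2" .
  show "0 \<le> \<rho> * B * sqrt (real CARD('d) * real (card S) / (4 * lam))"
    using assms(1-3) by simp
qed

lemma norm_diff_le_variation:
  fixes f :: "nat \<Rightarrow> 'a::real_normed_vector"
  assumes "1 \<le> s" and "s \<le> h" and "h \<le> H"
  shows "norm (f s - f h) \<le> (\<Sum>p=1..H-1. norm (f (p + 1) - f p))"
proof -
  have "norm (f s - f h) = norm (\<Sum>p=s..<h. f (Suc p) - f p)"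
    using assms(2) by (simp add: sum_Suc_diff' norm_minus_commute)
  also have "\<dots> \<le> (\<Sum>p=s..<h. norm (f (Suc p) - f p))"
    by (rule norm_sum)
  also have "\<dots> \<le> (\<Sum>p=1..H-1. norm (f (Suc p) - f p))"
    by (rule sum_mono2) (use assms in auto)
  finally show ?thesis by simp
qed

theorem lemma6:
  fixes lam \<gamma> BH :: real
    and Z :: "nat \<Rightarrow> real^'d"
    and \<Theta> :: "nat \<Rightarrow> real^'n^'d"
    and n m H L h0 h :: nat
  assumes "lam > 0" and "\<gamma> \<ge> 0"
    and "\<forall>s. norm (Z s) \<le> 1 + \<gamma>"
    and "CARD('n) = n" and "CARD('d) = n + m"
    and "(\<Sum>s=1..H-1. frob_norm (\<Theta> (s+1) - \<Theta> s)) \<le> BH"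
    and "h \<in> {1..H}" and "1 \<le> h0" and "h0 \<le> h" and "h - h0 \<le> L"
  shows "frob_norm (matrix_inv ((\<Sum>s=h0..<h. outer (Z s)) + lam *\<^sub>R mat 1)
            ** (\<Sum>s=h0..<h. outer (Z s) ** (\<Theta> s - \<Theta> h)))
         \<le> (1 + \<gamma>) * sqrt (real L * real (m + n) / lam) * BH"
proof -
  have "0 \<le> (\<Sum>s=1..H-1. frob_norm (\<Theta> (s+1) - \<Theta> s))"
    by (simp add: frob_norm_eq_norm sum_nonneg)
  then have "0 \<le> BH"
    using assms(6) by linarith
  moreover have "norm (\<Theta> s - \<Theta> h) \<le> BH" if "s \<in> {h0..<h}" for s
    using norm_diff_le_variation[of s h H \<Theta>] that assms(6-8) by (simp add: frob_norm_eq_norm)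
  ultimately have "norm (matrix_inv (ridge_gram {h0..<h} Z lam)
        ** (\<Sum>s=h0..<h. outer (Z s) ** (\<Theta> s - \<Theta> h)))
      \<le> (1 + \<gamma>) * BH * sqrt (real CARD('d) * real (card {h0..<h}) / (4 * lam))"
    using assms(1-3) by (intro norm_ridge_bias_le) auto
  also have "\<dots> \<le> (1 + \<gamma>) * BH * sqrt (real L * real (m + n) / lam)"
  proof -
    have "real (card {h0..<h}) \<le> real L"
      using assms(10) by simp
    then have "real CARD('d) * real (card {h0..<h}) \<le> real L * real (m + n)"
      using assms(5) by (metis add.commute mult.commute mult_left_mono of_nat_0_le_iff)
    then show ?thesis
      using assms(1,2) \<open>0 \<le> BH\<close> by (intro mult_left_mono real_sqrt_le_mono frac_le) simp_all
  qed
  finally show ?thesis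
    by (simp add: ridge_gram_def frob_norm_eq_norm mult_ac)
qed

end
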